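(* Let $T>0$, $\sigma>0$, $\lambda>0$, $\kappa>0$, let the cost function be $g(z)=\kappa z$, and let $H^1\in\mathcal{C}^2_b(\mathbb{R})$, $H^1\ne0$. For each $N\ge1$ consider the $N$-player risk-neutral game with claims $H^1$ for player 1 and $H^i=0$ for $i=2,\dots,N$, and let $(v^{1,N},\dots,v^{N,N})$ be the classical solution of $$0=v^j_t+\tfrac12\sigma^2v^j_{pp}+\lambda\dot X^*\,v^j_p-\kappa\,\dot X^j\,\dot X^*,\qquad v^j(T,p)=H^j(p),\quad j=1,\dots,N,$$ with equilibrium trading speeds $\dot X^j=\frac{\lambda}{\kappa}\Big(v^j_p-\frac{1}{N+1}\sum_{i=1}^Nv^i_p\Big)$ and aggregate speed $\sum_{i=1}^N\dot X^i=\frac{\lambda}{\kappa(N+1)}\sum_{i=1}^Nv^i_p$. Then the aggregate equilibrium trading speed satisfies $\lim_{N\to\infty}\sum_{i=1}^N\dot X^i_t=0$.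
   Context: Setting: players $j=1,\dots,N$ hold cash-settled claims $H^j(P_T)$ on a stock with price $dP_t=\sigma dB_t+\lambda\sum_i\dot X^i_t dt$, where $X^i$ is player $i$'s (absolutely continuous) holding with $X^i_0=0$, and player $j$ maximizes $\mathbb{E}[-\int_0^T\dot X^j_t\,g(\sum_i\dot X^i_t)dt+H^j(P_T)]$. The functions $v^j$ are the players' value functions and the formulas give the Nash equilibrium feedback trading speeds (functions of time and spot price). $\mathcal{C}^2_b$ denotes functions bounded together with derivatives up to order 2. *)

theory Defs
  imports "HOL-Analysis.Analysis"
begin

definition indiv_speed :: "real \<Rightarrow> real \<Rightarrow> nat \<Rightarrow> (nat \<Rightarrow> real \<Rightarrow> real \<Rightarrow> real) \<Rightarrow> nat \<Rightarrow> real \<Rightarrow> real \<Rightarrow> real" where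
  "indiv_speed lam kap N vpN j t p =
     lam / kap * (vpN j t p - (1 / (real N + 1)) * (\<Sum>i\<in>{1..N}. vpN i t p))"

definition aggr_speed :: "real \<Rightarrow> real \<Rightarrow> nat \<Rightarrow> (nat \<Rightarrow> real \<Rightarrow> real \<Rightarrow> real) \<Rightarrow> real \<Rightarrow> real \<Rightarrow> real" where
  "aggr_speed lam kap N vpN t p = lam / (kap * (real N + 1)) * (\<Sum>i\<in>{1..N}. vpN i t p)"

definition classical_solution ::
  "real \<Rightarrow> real \<Rightarrow> real \<Rightarrow> real \<Rightarrow> nat \<Rightarrow> (nat \<Rightarrow> real \<Rightarrow> real) \<Rightarrow>
   (nat \<Rightarrow> real \<Rightarrow> real \<Rightarrow> real) \<Rightarrow> (nat \<Rightarrow> real \<Rightarrow> real \<Rightarrow> real) \<Rightarrow>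
   (nat \<Rightarrow> real \<Rightarrow> real \<Rightarrow> real) \<Rightarrow> (nat \<Rightarrow> real \<Rightarrow> real \<Rightarrow> real) \<Rightarrow> bool" where
  "classical_solution T sig lam kap N H v vt vp vpp \<longleftrightarrow>
    (\<forall>j\<in>{1..N}.
      (\<forall>t\<in>{0..<T}. \<forall>p. ((\<lambda>s. v j s p) has_real_derivative vt j t p) (at t within {0..T})) \<and>
      (\<forall>t\<in>{0..T}. \<forall>p. (v j t has_real_derivative vp j t p) (at p)) \<and>
      (\<forall>t\<in>{0..T}. \<forall>p. (vp j t has_real_derivative vpp j t p) (at p)) \<and>
      continuous_on ({0..T} \<times> UNIV) (\<lambda>(t,p). v j t p) \<and>
      continuous_on ({0..T} \<times> UNIV) (\<lambda>(t,p). vp j t p) \<and>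
      continuous_on ({0..T} \<times> UNIV) (\<lambda>(t,p). vpp j t p) \<and>
      continuous_on ({0..<T} \<times> UNIV) (\<lambda>(t,p). vt j t p) \<and>
      (\<exists>B. \<forall>t\<in>{0..T}. \<forall>p. \<bar>v j t p\<bar> \<le> B \<and> \<bar>vp j t p\<bar> \<le> B \<and> \<bar>vpp j t p\<bar> \<le> B) \<and>
      (\<forall>p. v j T p = H j p) \<and>
      (\<forall>t\<in>{0..<T}. \<forall>p.
         0 = vt j t p + sig^2 / 2 * vpp j t p
             + lam * aggr_speed lam kap N vp t p * vp j t p
             - kap * indiv_speed lam kap N vp j t p * aggr_speed lam kap N vp t p))"

definition C2b :: "(real \<Rightarrow> real) \<Rightarrow> bool" where
  "C2b H \<longleftrightarrow> (\<exists>H' H''. (\<forall>p. (H has_real_derivative H' p) (at p)) \<and>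
      (\<forall>p. (H' has_real_derivative H'' p) (at p)) \<and> continuous_on UNIV H'' \<and>
      (\<exists>B. \<forall>p. \<bar>H p\<bar> \<le> B \<and> \<bar>H' p\<bar> \<le> B \<and> \<bar>H'' p\<bar> \<le> B))"

end

theory Submission
  imports Defs
begin

text \<open>Summing the N equations, the aggregate value S = v^1 + ... + v^N solves the scalar
  equation S_t + sig^2/2 S_pp + c (S_p)^2 = 0 with terminal value H^1. The difference
  S(t,p+h) - S(t,p) solves a linear equation with bounded drift, so by the maximum principle
  S(t,-) inherits the Lipschitz constant of H^1. Hence |S_p| is bounded uniformly in N,
  and the aggregate speed lam/(kap(N+1)) S_p tends to 0.\<close>

lemma two_abs_le_one_plus_square: "2 * \<bar>p\<bar> \<le> 1 + (p::real)\<^sup>2"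
proof -
  have "0 \<le> (\<bar>p\<bar> - 1)\<^sup>2" by simp
  then show ?thesis by (simp add: power2_eq_square algebra_simps)
qed

lemma DERIV2_nonpos_at_max:
  fixes f f' :: "real \<Rightarrow> real"
  assumes f': "\<And>y. (f has_real_derivative f' y) (at y)"
    and f'': "(f' has_real_derivative D) (at x)"
    and fmax: "\<And>y. f y \<le> f x"
  shows "D \<le> 0"
proof (rule ccontr)
  assume "\<not> D \<le> 0"
  then obtain d where d: "d > 0" and inc: "\<And>h. 0 < h \<Longrightarrow> h < d \<Longrightarrow> f' x < f' (x + h)"
    using DERIV_pos_inc_right[OF f''] by force
  have "f' x = 0"
    using DERIV_local_max[OF f' zero_less_one] fmax by blast
  obtain z where z: "x < z" "z < x + d/2" and mvt: "f (x + d/2) - f x = (x + d/2 - x) * f' z"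
    using MVT2[of x "x + d/2" f f'] d f' by auto
  have "f' z > 0"
    using inc[of "z - x"] z \<open>f' x = 0\<close> by simp
  with d have "(x + d/2 - x) * f' z > 0" by simp
  with mvt have "f (x + d/2) > f x" by linarith
  with fmax show False by (simp add: not_less[symmetric])
qed

lemma DERIV_nonpos_at_max_within:
  fixes f :: "real \<Rightarrow> real"
  assumes f': "(f has_real_derivative D) (at t within {a..b})"
    and t: "t \<in> {a..<b}"
    and fmax: "\<And>s. s \<in> {a..b} \<Longrightarrow> f s \<le> f t"
  shows "D \<le> 0"
proof (rule ccontr)
  assume "\<not> D \<le> 0"
  then have "\<forall>\<^sub>F s in at t within {a..b}. 0 < (f s - f t) / (s - t)"
    using order_tendstoD(1)[OF f'[unfolded has_field_derivative_iff]] by simp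
  then obtain d where d: "d > 0"
    and quot: "\<And>s. s \<in> {a..b} \<Longrightarrow> s \<noteq> t \<Longrightarrow> dist s t < d \<Longrightarrow> 0 < (f s - f t) / (s - t)"
    unfolding eventually_at by blast
  define s where "s = min (t + d/2) b"
  have s: "s \<in> {a..b}" "t < s" "dist s t < d"
    using t d unfolding s_def dist_real_def by auto
  then have "0 < (f s - f t) / (s - t)" using quot by auto
  with s have "f s > f t" by (simp add: zero_less_divide_iff)
  with fmax[OF s(1)] show False by simp
qed

lemma continuous_attains_sup_strip:
  fixes Z :: "'a::topological_space \<Rightarrow> real \<Rightarrow> real"
  assumes K: "compact K"
    and cont: "continuous_on (K \<times> UNIV) (\<lambda>(t,p). Z t p)"
    and t1: "t1 \<in> K" and nonneg: "0 \<le> Z t1 p1"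
    and neg: "\<And>t p. t \<in> K \<Longrightarrow> R < \<bar>p\<bar> \<Longrightarrow> Z t p < 0"
  shows "\<exists>t0\<in>K. \<exists>p0. \<forall>t\<in>K. \<forall>p. Z t p \<le> Z t0 p0"
proof -
  define C where "C = K \<times> {-R..R}"
  have "(t1, p1) \<in> C"
    using t1 nonneg neg[of t1 p1] unfolding C_def by force
  moreover have "continuous_on C (\<lambda>(t,p). Z t p)"
    using continuous_on_subset[OF cont] unfolding C_def by blast
  moreover have "compact C" unfolding C_def using K by (simp add: compact_Times)
  ultimately have "\<exists>x0\<in>C. \<forall>y\<in>C. case_prod Z y \<le> case_prod Z x0"
    using continuous_attains_sup[of C "case_prod Z"] by blast
  then obtain x0 where x0: "x0 \<in> C" and mx: "\<And>y. y \<in> C \<Longrightarrow> case_prod Z y \<le> case_prod Z x0"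
    by blast
  obtain t0 p0 where x0_eq: "x0 = (t0, p0)" by fastforce
  have "Z t p \<le> Z t0 p0" if "t \<in> K" for t p
  proof (cases "\<bar>p\<bar> \<le> R")
    case True
    then show ?thesis using mx[of "(t, p)"] that unfolding C_def x0_eq by (auto simp: abs_le_iff)
  next
    case False
    then show ?thesis
      using neg[OF that, of p] nonneg mx[of "(t1, p1)"] \<open>(t1, p1) \<in> C\<close> x0_eq by fastforce
  qed
  with x0 show ?thesis unfolding C_def x0_eq by auto
qed

subsection \<open>A maximum principle\<close>

text \<open>The penalty eps exp(K(T-t)) (1 + p^2) forces a maximum of D on the unbounded strip, and
  eps is small enough for that maximum to stay above the terminal values.\<close>

lemma penalized_max_exists:
  fixes T K B M :: real and D :: "real \<Rightarrow> real \<Rightarrow> real"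
  assumes K: "K \<ge> 0"
    and cont: "continuous_on ({0..T} \<times> UNIV) (\<lambda>(t,p). D t p)"
    and bnd: "\<forall>t\<in>{0..T}. \<forall>p. D t p \<le> B"
    and termc: "\<forall>p. D T p \<le> M"
    and t1: "t1 \<in> {0..T}" and exceed: "M < D t1 p1"
  shows "\<exists>\<epsilon>>0. \<exists>t0\<in>{0..<T}. \<exists>p0. \<forall>t\<in>{0..T}. \<forall>p.
           D t p - \<epsilon> * exp (K*(T-t)) * (1 + p\<^sup>2) \<le> D t0 p0 - \<epsilon> * exp (K*(T-t0)) * (1 + p0\<^sup>2)"
proof -
  define \<epsilon> where "\<epsilon> = (D t1 p1 - M) / (2 * exp (K*(T-t1)) * (1 + p1\<^sup>2))"
  have \<epsilon>: "\<epsilon> > 0" unfolding \<epsilon>_def using exceed by (simp add: add_pos_nonneg)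
  define Z where "Z t p = D t p - M - \<epsilon> * exp (K*(T-t)) * (1 + p\<^sup>2)" for t p
  have "0 < exp (K*(T-t1)) * (1 + p1\<^sup>2)" by (simp add: add_pos_nonneg)
  then have "Z t1 p1 = (D t1 p1 - M) / 2"
    unfolding Z_def \<epsilon>_def by (simp add: field_simps)
  with exceed have Z1: "Z t1 p1 > 0" by simp
  define R where "R = (\<bar>B\<bar> + \<bar>M\<bar> + 1) / \<epsilon>"
  have far: "Z t p < 0" if t: "t \<in> {0..T}" and p: "R < \<bar>p\<bar>" for t p
  proof -
    have "\<bar>B\<bar> + \<bar>M\<bar> + 1 < \<epsilon> * \<bar>p\<bar>"
      using p \<epsilon> unfolding R_def by (simp add: pos_divide_less_eq mult.commute)
    also have "\<dots> \<le> \<epsilon> * (1 + p\<^sup>2)"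
      using \<epsilon> two_abs_le_one_plus_square[of p] by (intro mult_left_mono) auto
    also have "\<dots> \<le> \<epsilon> * exp (K*(T-t)) * (1 + p\<^sup>2)"
      using \<epsilon> t K by (intro mult_right_mono) (auto simp: add_pos_nonneg)
    finally have "\<bar>B\<bar> + \<bar>M\<bar> + 1 < \<epsilon> * exp (K*(T-t)) * (1 + p\<^sup>2)" .
    moreover have "D t p \<le> B" using bnd t by blast
    ultimately show ?thesis unfolding Z_def by linarith
  qed
  have "continuous_on ({0..T} \<times> UNIV) (\<lambda>x. D (fst x) (snd x))"
    using cont by (simp add: case_prod_beta')
  then have "continuous_on ({0..T} \<times> UNIV) (\<lambda>x. Z (fst x) (snd x))"
    unfolding Z_def by (intro continuous_intros)
  then have cZ: "continuous_on ({0..T} \<times> UNIV) (\<lambda>(t,p). Z t p)"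
    by (simp add: case_prod_beta')
  obtain t0 p0 where t0: "t0 \<in> {0..T}" and gmax: "\<And>t p. t \<in> {0..T} \<Longrightarrow> Z t p \<le> Z t0 p0"
    using continuous_attains_sup_strip[of "{0..T}" Z, OF compact_Icc cZ t1 less_imp_le[OF Z1] far]
    by blast
  have "t0 \<noteq> T"
  proof
    assume "t0 = T"
    have "\<epsilon> * exp (K*(T-T)) * (1 + p0\<^sup>2) > 0" using \<epsilon> by (simp add: add_pos_nonneg)
    then have "Z T p0 < 0" using termc unfolding Z_def by (smt (verit))
    with gmax[OF t1, of p1] Z1 \<open>t0 = T\<close> show False by simp
  qed
  with t0 have "t0 \<in> {0..<T}" by simp
  moreover have "\<forall>t\<in>{0..T}. \<forall>p. D t p - \<epsilon> * exp (K*(T-t)) * (1 + p\<^sup>2)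
      \<le> D t0 p0 - \<epsilon> * exp (K*(T-t0)) * (1 + p0\<^sup>2)"
    using gmax unfolding Z_def by force
  ultimately show ?thesis using \<epsilon> by blast
qed

text \<open>With K = 2a + beta + 1 the penalty turns the equation into a strict inequality at the
  maximum of the penalized function, which contradicts the first and second order conditions there.\<close>

lemma max_principle:
  fixes T a \<beta> B M :: real and D Dt Dp Dpp b :: "real \<Rightarrow> real \<Rightarrow> real"
  assumes T: "T > 0" and a: "a \<ge> 0"
    and cont: "continuous_on ({0..T} \<times> UNIV) (\<lambda>(t,p). D t p)"
    and bnd: "\<forall>t\<in>{0..T}. \<forall>p. D t p \<le> B"
    and dt: "\<forall>t\<in>{0..<T}. \<forall>p. ((\<lambda>s. D s p) has_real_derivative Dt t p) (at t within {0..T})"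
    and dp: "\<forall>t\<in>{0..<T}. \<forall>p. (D t has_real_derivative Dp t p) (at p)"
    and dpp: "\<forall>t\<in>{0..<T}. \<forall>p. (Dp t has_real_derivative Dpp t p) (at p)"
    and eq: "\<forall>t\<in>{0..<T}. \<forall>p. Dt t p + a * Dpp t p + b t p * Dp t p = 0"
    and bb: "\<forall>t\<in>{0..<T}. \<forall>p. \<bar>b t p\<bar> \<le> \<beta>"
    and termc: "\<forall>p. D T p \<le> M"
  shows "\<forall>t\<in>{0..T}. \<forall>p. D t p \<le> M"
proof (intro ballI allI, rule ccontr)
  fix t1 p1 assume t1: "t1 \<in> {0..T}" and "\<not> D t1 p1 \<le> M"
  then have exceed: "M < D t1 p1" by simp
  have \<beta>: "\<beta> \<ge> 0" using bb T by fastforce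
  define K where "K = 2*a + \<beta> + 1"
  have K: "K \<ge> 0" unfolding K_def using a \<beta> by simp
  obtain \<epsilon> t0 p0 where \<epsilon>: "\<epsilon> > 0" and t0: "t0 \<in> {0..<T}"
    and gmax: "\<And>t p. t \<in> {0..T} \<Longrightarrow> D t p - \<epsilon> * exp (K*(T-t)) * (1 + p\<^sup>2)
                 \<le> D t0 p0 - \<epsilon> * exp (K*(T-t0)) * (1 + p0\<^sup>2)"
    using penalized_max_exists[OF K cont bnd termc t1 exceed] by blast
  define w where "w = \<epsilon> * exp (K*(T-t0))"
  have w: "w > 0" unfolding w_def using \<epsilon> by simp
  have Zp: "((\<lambda>p. D t0 p - w * (1 + p\<^sup>2)) has_real_derivative Dp t0 p - w*(2*p)) (at p)" for p
    using dp t0 by (auto intro!: derivative_eq_intros)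
  have Zmax: "D t0 p - w * (1 + p\<^sup>2) \<le> D t0 p0 - w * (1 + p0\<^sup>2)" for p
    using gmax[of t0 p] t0 unfolding w_def by simp
  have "((\<lambda>p. Dp t0 p - w*(2*p)) has_real_derivative Dpp t0 p0 - w*2) (at p0)"
    using dpp t0 by (auto intro!: derivative_eq_intros)
  then have Zpp: "Dpp t0 p0 - w*2 \<le> 0"
    by (rule DERIV2_nonpos_at_max[OF Zp]) (use Zmax in simp)
  have Zp0: "Dp t0 p0 - w*(2*p0) = 0"
    using DERIV_local_max[OF Zp zero_less_one] Zmax by blast
  have "((\<lambda>s. D s p0 - \<epsilon> * exp (K*(T-s)) * (1 + p0\<^sup>2)) has_real_derivative
          Dt t0 p0 - \<epsilon> * (exp (K*(T-t0)) * (K*(0-1))) * (1 + p0\<^sup>2)) (at t0 within {0..T})"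
    using dt t0 by (auto intro!: derivative_eq_intros)
  then have "Dt t0 p0 - \<epsilon> * (exp (K*(T-t0)) * (K*(0-1))) * (1 + p0\<^sup>2) \<le> 0"
    by (rule DERIV_nonpos_at_max_within[OF _ t0]) (use gmax in simp)
  then have Zt: "Dt t0 p0 + K*w*(1 + p0\<^sup>2) \<le> 0"
    by (simp add: w_def algebra_simps)
  have "b t0 p0 * Dp t0 p0 = w * (b t0 p0 * (2*p0))" using Zp0 by (simp add: algebra_simps)
  also have "\<dots> \<le> w * (\<beta> * (1 + p0\<^sup>2))"
  proof -
    have "b t0 p0 * (2*p0) \<le> \<bar>b t0 p0 * (2*p0)\<bar>" by (rule abs_ge_self)
    also have "\<dots> = \<bar>b t0 p0\<bar> * (2*\<bar>p0\<bar>)" by (simp add: abs_mult)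
    also have "\<dots> \<le> \<beta> * (1 + p0\<^sup>2)"
      using bb t0 two_abs_le_one_plus_square[of p0] \<beta> by (intro mult_mono) auto
    finally show ?thesis using w by simp
  qed
  finally have drift: "b t0 p0 * Dp t0 p0 \<le> w * (\<beta> * (1 + p0\<^sup>2))" .
  have diffusion: "a * Dpp t0 p0 \<le> a * (w*2)" using Zpp a by (intro mult_left_mono) auto
  have "- K*w*(1 + p0\<^sup>2) + a * (w*2) + w * (\<beta> * (1 + p0\<^sup>2)) = - w * (1 + (2*a + 1) * p0\<^sup>2)"
    unfolding K_def by (simp add: algebra_simps)
  moreover have "w * (1 + (2*a + 1) * p0\<^sup>2) > 0" using w a by (simp add: add_pos_nonneg)
  moreover have "Dt t0 p0 + a * Dpp t0 p0 + b t0 p0 * Dp t0 p0 = 0" using eq t0 by blast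
  ultimately show False using Zt drift diffusion by linarith
qed

subsection \<open>Lipschitz bounds for a viscous Hamilton-Jacobi equation\<close>

lemma DERIV_abs_le_of_lipschitz:
  fixes f :: "real \<Rightarrow> real"
  assumes f': "(f has_real_derivative D) (at x)"
    and lip: "\<And>h. \<bar>f (x + h) - f x\<bar> \<le> L * \<bar>h\<bar>"
  shows "\<bar>D\<bar> \<le> L"
proof -
  have "((\<lambda>h. \<bar>(f (x + h) - f x) / h\<bar>) \<longlongrightarrow> \<bar>D\<bar>) (at 0)"
    using f' unfolding DERIV_def by (rule tendsto_rabs)
  moreover have "\<bar>(f (x + h) - f x) / h\<bar> \<le> L" if "h \<noteq> 0" for h
    using lip[of h] that by (simp add: abs_divide divide_le_eq)
  then have "\<forall>\<^sub>F h in at 0. \<bar>(f (x + h) - f x) / h\<bar> \<le> L"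
    by (simp add: eventually_at_filter)
  ultimately show ?thesis by (rule tendsto_upperbound) simp
qed

text \<open>Subtracting the equation at p from the one at p + h leaves a linear equation for the
  difference, with drift c (S_p(t,p+h) + S_p(t,p)), to which the maximum principle applies.\<close>

lemma shifted_difference_le:
  fixes T a c B L h :: real and S St Sp Spp :: "real \<Rightarrow> real \<Rightarrow> real"
  assumes T: "T > 0" and a: "a \<ge> 0"
    and cont: "continuous_on ({0..T} \<times> UNIV) (\<lambda>(t,p). S t p)"
    and bnd: "\<forall>t\<in>{0..T}. \<forall>p. \<bar>S t p\<bar> \<le> B \<and> \<bar>Sp t p\<bar> \<le> B"
    and dt: "\<forall>t\<in>{0..<T}. \<forall>p. ((\<lambda>s. S s p) has_real_derivative St t p) (at t within {0..T})"
    and dp: "\<forall>t\<in>{0..T}. \<forall>p. (S t has_real_derivative Sp t p) (at p)"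
    and dpp: "\<forall>t\<in>{0..<T}. \<forall>p. (Sp t has_real_derivative Spp t p) (at p)"
    and eq: "\<forall>t\<in>{0..<T}. \<forall>p. St t p + a * Spp t p + c * (Sp t p)\<^sup>2 = 0"
    and termc: "\<forall>x y. \<bar>S T x - S T y\<bar> \<le> L * \<bar>x - y\<bar>"
  shows "\<forall>t\<in>{0..T}. \<forall>p. S t (p + h) - S t p \<le> L * \<bar>h\<bar>"
proof (rule max_principle[where D = "\<lambda>t p. S t (p + h) - S t p"
      and b = "\<lambda>t p. c * (Sp t (p + h) + Sp t p)" and \<beta> = "\<bar>c\<bar> * (2*B)" and B = "2*B"])
  have "continuous_on ({0..T} \<times> UNIV) (\<lambda>x. S (fst x) (snd x))"
    using cont by (simp add: case_prod_beta')
  moreover have "continuous_on ({0..T} \<times> UNIV) (\<lambda>x. S (fst x) (snd x + h))"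
    by (rule continuous_on_compose2[OF calculation, of _ "\<lambda>x. (fst x, snd x + h)", simplified])
      (auto intro!: continuous_intros)
  ultimately show "continuous_on ({0..T} \<times> UNIV) (\<lambda>(t,p). S t (p + h) - S t p)"
    unfolding case_prod_beta' by (intro continuous_intros)
  show "\<forall>t\<in>{0..T}. \<forall>p. S t (p + h) - S t p \<le> 2*B"
  proof (intro ballI allI)
    fix t p assume "t \<in> {0..T}"
    then have "\<bar>S t (p + h)\<bar> \<le> B" "\<bar>S t p\<bar> \<le> B" using bnd by auto
    then show "S t (p + h) - S t p \<le> 2*B" by (simp add: abs_le_iff)
  qed
  show "\<forall>t\<in>{0..<T}. \<forall>p. \<bar>c * (Sp t (p + h) + Sp t p)\<bar> \<le> \<bar>c\<bar> * (2*B)"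
  proof (intro ballI allI)
    fix t p assume "t \<in> {0..<T}"
    then have "\<bar>Sp t (p + h)\<bar> \<le> B" "\<bar>Sp t p\<bar> \<le> B" using bnd by auto
    then have "\<bar>Sp t (p + h) + Sp t p\<bar> \<le> 2*B" by (simp add: abs_le_iff)
    then show "\<bar>c * (Sp t (p + h) + Sp t p)\<bar> \<le> \<bar>c\<bar> * (2*B)"
      unfolding abs_mult by (intro mult_left_mono) auto
  qed
  have shift: "((\<lambda>x. g (x + h)) has_real_derivative g' (p + h)) (at p)"
    if "(g has_real_derivative g' (p + h)) (at (p + h))" for g g' :: "real \<Rightarrow> real" and p
    using DERIV_shift[of g "g' (p + h)" p h] that by (simp add: add.commute)
  show "\<forall>t\<in>{0..<T}. \<forall>p. ((\<lambda>x. S t (x + h) - S t x) has_real_derivative Sp t (p + h) - Sp t p) (at p)"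
    using dp by (auto intro!: derivative_eq_intros shift)
  show "\<forall>t\<in>{0..<T}. \<forall>p. ((\<lambda>x. Sp t (x + h) - Sp t x) has_real_derivative Spp t (p + h) - Spp t p) (at p)"
    using dpp by (auto intro!: derivative_eq_intros shift)
  show "\<forall>t\<in>{0..<T}. \<forall>p. ((\<lambda>s. S s (p + h) - S s p) has_real_derivative St t (p + h) - St t p) (at t within {0..T})"
    using dt by (auto intro!: derivative_eq_intros)
  show "\<forall>t\<in>{0..<T}. \<forall>p. (St t (p + h) - St t p) + a * (Spp t (p + h) - Spp t p)
      + c * (Sp t (p + h) + Sp t p) * (Sp t (p + h) - Sp t p) = 0"
  proof (intro ballI allI)
    fix t p assume "t \<in> {0..<T}"
    then have "St t (p + h) + a * Spp t (p + h) + c * (Sp t (p + h))\<^sup>2 = 0"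
      and "St t p + a * Spp t p + c * (Sp t p)\<^sup>2 = 0" using eq by blast+
    then show "(St t (p + h) - St t p) + a * (Spp t (p + h) - Spp t p)
        + c * (Sp t (p + h) + Sp t p) * (Sp t (p + h) - Sp t p) = 0"
      by (simp add: algebra_simps power2_eq_square)
  qed
  show "\<forall>p. S T (p + h) - S T p \<le> L * \<bar>h\<bar>"
    using termc by (metis abs_le_iff add_diff_cancel_left')
qed (use T a in auto)

lemma gradient_bound_of_lipschitz_terminal:
  fixes T a c B L :: real and S St Sp Spp :: "real \<Rightarrow> real \<Rightarrow> real"
  assumes T: "T > 0" and a: "a \<ge> 0"
    and cont: "continuous_on ({0..T} \<times> UNIV) (\<lambda>(t,p). S t p)"
    and bnd: "\<forall>t\<in>{0..T}. \<forall>p. \<bar>S t p\<bar> \<le> B \<and> \<bar>Sp t p\<bar> \<le> B"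
    and dt: "\<forall>t\<in>{0..<T}. \<forall>p. ((\<lambda>s. S s p) has_real_derivative St t p) (at t within {0..T})"
    and dp: "\<forall>t\<in>{0..T}. \<forall>p. (S t has_real_derivative Sp t p) (at p)"
    and dpp: "\<forall>t\<in>{0..<T}. \<forall>p. (Sp t has_real_derivative Spp t p) (at p)"
    and eq: "\<forall>t\<in>{0..<T}. \<forall>p. St t p + a * Spp t p + c * (Sp t p)\<^sup>2 = 0"
    and termc: "\<forall>x y. \<bar>S T x - S T y\<bar> \<le> L * \<bar>x - y\<bar>"
  shows "\<forall>t\<in>{0..T}. \<forall>p. \<bar>Sp t p\<bar> \<le> L"
proof (intro ballI allI)
  fix t p assume t: "t \<in> {0..T}"
  note shift = shifted_difference_le[OF assms]
  have "\<bar>S t (p + h) - S t p\<bar> \<le> L * \<bar>h\<bar>" for h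
  proof -
    have "S t (p + h) - S t p \<le> L * \<bar>h\<bar>" using shift t by blast
    moreover have "S t ((p + h) + -h) - S t (p + h) \<le> L * \<bar>-h\<bar>" using shift t by blast
    ultimately show ?thesis by (simp add: abs_le_iff)
  qed
  then show "\<bar>Sp t p\<bar> \<le> L"
    using DERIV_abs_le_of_lipschitz dp t by blast
qed

subsection \<open>The aggregate value of the N-player game\<close>

lemma sum_indiv_speed:
  "(\<Sum>j\<in>{1..N}. indiv_speed lam kap N vpN j t p) = aggr_speed lam kap N vpN t p"
proof -
  have "(\<Sum>j\<in>{1..N}. indiv_speed lam kap N vpN j t p)
      = lam / kap * ((\<Sum>j\<in>{1..N}. vpN j t p) * (1 - real N / (real N + 1)))"
    unfolding indiv_speed_def by (simp add: sum_distrib_left sum_subtractf algebra_simps)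
  also have "1 - real N / (real N + 1) = 1 / (real N + 1)" by (simp add: field_simps)
  finally show ?thesis unfolding aggr_speed_def by simp
qed

lemma sum_value_functions_equation:
  assumes sol: "classical_solution T sig lam kap N H v vt vp vpp" and t: "t \<in> {0..<T}"
  shows "(\<Sum>j\<in>{1..N}. vt j t p) + sig\<^sup>2 / 2 * (\<Sum>j\<in>{1..N}. vpp j t p)
      + (lam - kap * (lam / (kap * (real N + 1)))) * (lam / (kap * (real N + 1)))
        * (\<Sum>j\<in>{1..N}. vp j t p)\<^sup>2 = 0"
proof -
  define q where "q = lam / (kap * (real N + 1))"
  define A where "A = aggr_speed lam kap N vp t p"
  have A: "A = q * (\<Sum>j\<in>{1..N}. vp j t p)" unfolding A_def aggr_speed_def q_def ..
  have "0 = (\<Sum>j\<in>{1..N}. vt j t p + sig\<^sup>2 / 2 * vpp j t p + lam * A * vp j t p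
      - kap * indiv_speed lam kap N vp j t p * A)"
    using sol t unfolding classical_solution_def A_def by (intro sum.neutral[symmetric]) auto
  also have "\<dots> = (\<Sum>j\<in>{1..N}. vt j t p) + sig\<^sup>2 / 2 * (\<Sum>j\<in>{1..N}. vpp j t p)
      + lam * A * (\<Sum>j\<in>{1..N}. vp j t p) - kap * (\<Sum>j\<in>{1..N}. indiv_speed lam kap N vp j t p) * A"
    by (simp add: sum.distrib sum_subtractf sum_distrib_left sum_distrib_right)
  also have "(\<Sum>j\<in>{1..N}. indiv_speed lam kap N vp j t p) = A"
    unfolding A_def by (rule sum_indiv_speed)
  finally show ?thesis
    unfolding q_def[symmetric] A by (simp add: algebra_simps power2_eq_square)
qed

lemma aggregate_gradient_bound:
  assumes T: "T > 0" and sol: "classical_solution T sig lam kap N H v vt vp vpp"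
    and lip: "\<And>x y. \<bar>(\<Sum>j\<in>{1..N}. H j x) - (\<Sum>j\<in>{1..N}. H j y)\<bar> \<le> L * \<bar>x - y\<bar>"
    and t: "t \<in> {0..T}"
  shows "\<bar>\<Sum>j\<in>{1..N}. vp j t p\<bar> \<le> L"
proof -
  note cs = sol[unfolded classical_solution_def]
  define S where "S t p = (\<Sum>j\<in>{1..N}. v j t p)" for t p
  have "\<forall>j\<in>{1..N}. \<exists>B. \<forall>t\<in>{0..T}. \<forall>p. \<bar>v j t p\<bar> \<le> B \<and> \<bar>vp j t p\<bar> \<le> B"
    using cs by fast
  then obtain Bj where Bj: "\<forall>j\<in>{1..N}. \<forall>t\<in>{0..T}. \<forall>p. \<bar>v j t p\<bar> \<le> Bj j \<and> \<bar>vp j t p\<bar> \<le> Bj j"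
    by metis
  have bnd: "\<forall>t\<in>{0..T}. \<forall>p. \<bar>S t p\<bar> \<le> sum Bj {1..N} \<and> \<bar>\<Sum>j\<in>{1..N}. vp j t p\<bar> \<le> sum Bj {1..N}"
    unfolding S_def using Bj
    by (blast intro: sum_abs[THEN order_trans] sum_mono)
  have cont: "continuous_on ({0..T} \<times> UNIV) (\<lambda>(t,p). S t p)"
    using cs unfolding S_def case_prod_beta' by (intro continuous_on_sum) auto
  have dt: "\<forall>t\<in>{0..<T}. \<forall>p. ((\<lambda>s. S s p) has_real_derivative (\<Sum>j\<in>{1..N}. vt j t p)) (at t within {0..T})"
    using cs unfolding S_def by (auto intro!: DERIV_sum)
  have dp: "\<forall>t\<in>{0..T}. \<forall>p. (S t has_real_derivative (\<Sum>j\<in>{1..N}. vp j t p)) (at p)"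
    using cs unfolding S_def[abs_def] by (auto intro!: DERIV_sum)
  have dpp: "\<forall>t\<in>{0..<T}. \<forall>p. ((\<lambda>p. \<Sum>j\<in>{1..N}. vp j t p) has_real_derivative (\<Sum>j\<in>{1..N}. vpp j t p)) (at p)"
    using cs by (auto intro!: DERIV_sum)
  have eq: "\<forall>t\<in>{0..<T}. \<forall>p. (\<Sum>j\<in>{1..N}. vt j t p) + sig\<^sup>2 / 2 * (\<Sum>j\<in>{1..N}. vpp j t p)
      + (lam - kap * (lam / (kap * (real N + 1)))) * (lam / (kap * (real N + 1)))
        * (\<Sum>j\<in>{1..N}. vp j t p)\<^sup>2 = 0"
    using sum_value_functions_equation[OF sol] by blast
  have termc: "\<forall>x y. \<bar>S T x - S T y\<bar> \<le> L * \<bar>x - y\<bar>"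
    using cs lip unfolding S_def by simp
  have "\<forall>t\<in>{0..T}. \<forall>p. \<bar>\<Sum>j\<in>{1..N}. vp j t p\<bar> \<le> L"
    using gradient_bound_of_lipschitz_terminal[OF T _ cont bnd dt dp dpp eq termc] by simp
  with t show ?thesis by blast
qed

lemma sum_single_claim:
  fixes N :: nat and H1 :: "real \<Rightarrow> real"
  shows "N \<ge> 1 \<Longrightarrow> (\<Sum>j\<in>{1..N}. (if j = 1 then H1 else (\<lambda>p. 0)) x) = H1 x"
  by (simp add: if_distrib[of "\<lambda>f. f x"] sum.delta)

lemma abs_aggr_speed_le:
  assumes "lam > 0" "kap > 0" and "\<bar>\<Sum>j\<in>{1..N}. vpN j t p\<bar> \<le> L"
  shows "\<bar>aggr_speed lam kap N vpN t p\<bar> \<le> lam / kap * L * inverse (real (Suc N))"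
proof -
  have "\<bar>aggr_speed lam kap N vpN t p\<bar> = lam / (kap * (real N + 1)) * \<bar>\<Sum>j\<in>{1..N}. vpN j t p\<bar>"
    using assms(1,2) by (simp add: aggr_speed_def abs_mult)
  also have "\<dots> \<le> lam / (kap * (real N + 1)) * L"
    using assms(1,2) by (intro mult_left_mono[OF assms(3)]) simp
  also have "\<dots> = lam / kap * L * inverse (real (Suc N))" by (simp add: divide_inverse)
  finally show ?thesis .
qed

theorem mainTheorem6:
  fixes T sig lam kap :: real
    and H1 :: "real \<Rightarrow> real"
    and v vt vp vpp :: "nat \<Rightarrow> nat \<Rightarrow> real \<Rightarrow> real \<Rightarrow> real"
  assumes "T > 0" "sig > 0" "lam > 0" "kap > 0"
    and "C2b H1" and "H1 \<noteq> (\<lambda>p. 0)"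
    and "\<And>N. N \<ge> 1 \<Longrightarrow>
           classical_solution T sig lam kap N (\<lambda>j. if j = 1 then H1 else (\<lambda>p. 0))
             (v N) (vt N) (vp N) (vpp N)"
    and "t \<in> {0..T}"
  shows "(\<lambda>N. aggr_speed lam kap N (vp N) t p) \<longlonglongrightarrow> 0"
proof -
  obtain H' B where H': "\<And>x. (H1 has_real_derivative H' x) (at x)" and B: "\<And>x. \<bar>H' x\<bar> \<le> B"
    using \<open>C2b H1\<close> unfolding C2b_def by blast
  have lip: "\<bar>H1 x - H1 y\<bar> \<le> B * \<bar>x - y\<bar>" for x y
    using field_differentiable_bound[of UNIV H1 H' B x y] H' B by simp
  have "\<bar>aggr_speed lam kap N (vp N) t p\<bar> \<le> lam / kap * B * inverse (real (Suc N))" if "N \<ge> 1" for N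
  proof (rule abs_aggr_speed_le[OF \<open>lam > 0\<close> \<open>kap > 0\<close>])
    show "\<bar>\<Sum>j\<in>{1..N}. vp N j t p\<bar> \<le> B"
      using aggregate_gradient_bound[OF \<open>T > 0\<close> assms(7)[OF that] _ \<open>t \<in> {0..T}\<close>]
        lip sum_single_claim[OF that] by simp
  qed
  then have "\<forall>\<^sub>F N in sequentially.
      norm (aggr_speed lam kap N (vp N) t p) \<le> lam / kap * B * inverse (real (Suc N))"
    unfolding eventually_sequentially real_norm_def by blast
  moreover have "(\<lambda>N. lam / kap * B * inverse (real (Suc N))) \<longlonglongrightarrow> 0"
    by (rule tendsto_mult_right_zero[OF LIMSEQ_inverse_real_of_nat])
  ultimately show ?thesis by (rule Lim_null_comparison)
qed

end
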